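(* Let $n\ge1$, $m\ge2$, and let $\sigma_0,\dots,\sigma_m$ be the Coxeter generators of the affine Weyl group $\tilde C_m$. (1) Setting $\sigma_i(v)=s_i(v)$ for each vertex $v$ of $Y_{n,m}$ and $0\le i\le m$, and extending multiplicatively, gives a well-defined action of $\tilde C_m$ on the vertex set of $Y_{n,m}$. (2) $Y_{n,m}$ is the Schreier graph of $\tilde C_m$ with respect to the generating set $\{\sigma_0,\dots,\sigma_m\}$ and this action.
   Context: The Yoke graph $Y_{n,m}$ has vertices the tuples $v=(v_0,\dots,v_{m+1})$ with $v_0,v_{m+1}\in\mathbb{Z}_n$, $v_1,\dots,v_m\in\{0,1\}$, $\sum v_i\equiv0\pmod n$; $u\sim v$ iff there is $0\le i\le m$ with $u_j=v_j$ for $j\notin\{i,i+1\}$ and either ($u_i=v_i+1$, $u_{i+1}=v_{i+1}-1$) or ($u_i=v_i-1$, $u_{i+1}=v_{i+1}+1$), bucket entries mod $n$. For $0\le i\le m$, $\overleftarrow{s}_i(v)$ replaces $v_i,v_{i+1}$ by $v_i+1,v_{i+1}-1$, and $\overrightarrow{s}_i(v)$ by $v_i-1,v_{i+1}+1$. Define $s_0(v)=\overleftarrow{s}_0(v)$ if $v_1=1$, $\overrightarrow{s}_0(v)$ if $v_1=0$; $s_m(v)=\overleftarrow{s}_m(v)$ if $v_m=0$, $\overrightarrow{s}_m(v)$ if $v_m=1$; for $1\le i\le m-1$, $s_i$ swaps $v_i$ and $v_{i+1}$. $\tilde C_m$ is the group generated by $\sigma_0,\dots,\sigma_m$ with relations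 $\sigma_i^2=1$, $(\sigma_i\sigma_j)^2=1$ for $|i-j|>1$, $(\sigma_i\sigma_{i+1})^3=1$ for $1\le i\le m-2$, $(\sigma_0\sigma_1)^4=(\sigma_{m-1}\sigma_m)^4=1$. The Schreier graph of a group acting on a set $V$ with respect to a symmetric generating set $S$ is the (simple) graph on $V$ in which $x$ and $y\ne x$ are adjacent iff $y=s(x)$ for some $s\in S$. *)

theory Defs
  imports Main
begin

text \<open>Vertices of the Yoke graph Y_{n,m}: a tuple (v_0,...,v_{m+1}) is represented as a
  function nat => int, with v_0, v_{m+1} taken as representatives in {0..<n} of Z_n,
  v_1..v_m in {0,1}, and v_j = 0 for j > m+1 (padding).\<close>

definition yoke_V :: "nat \<Rightarrow> nat \<Rightarrow> (nat \<Rightarrow> int) set" where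
  "yoke_V n m = {v. v 0 \<in> {0..<int n} \<and> v (m+1) \<in> {0..<int n}
      \<and> (\<forall>j. 1 \<le> j \<and> j \<le> m \<longrightarrow> v j \<in> {0,1})
      \<and> (\<forall>j>m+1. v j = 0)
      \<and> (\<Sum>j\<le>m+1. v j) mod int n = 0}"

definition entry_add :: "nat \<Rightarrow> nat \<Rightarrow> nat \<Rightarrow> int \<Rightarrow> int \<Rightarrow> int" where
  "entry_add n m j x d = (if j = 0 \<or> j = m+1 then (x + d) mod int n else x + d)"

definition yoke_adj :: "nat \<Rightarrow> nat \<Rightarrow> (nat \<Rightarrow> int) \<Rightarrow> (nat \<Rightarrow> int) \<Rightarrow> bool" where
  "yoke_adj n m u v \<longleftrightarrow> (\<exists>i\<le>m. (\<forall>j. j \<noteq> i \<and> j \<noteq> i+1 \<longrightarrow> u j = v j) \<and>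
      ((u i = entry_add n m i (v i) 1 \<and> u (i+1) = entry_add n m (i+1) (v (i+1)) (-1)) \<or>
       (u i = entry_add n m i (v i) (-1) \<and> u (i+1) = entry_add n m (i+1) (v (i+1)) 1)))"

definition s_left :: "nat \<Rightarrow> nat \<Rightarrow> nat \<Rightarrow> (nat \<Rightarrow> int) \<Rightarrow> (nat \<Rightarrow> int)" where
  "s_left n m i v = v(i := entry_add n m i (v i) 1, i+1 := entry_add n m (i+1) (v (i+1)) (-1))"

definition s_right :: "nat \<Rightarrow> nat \<Rightarrow> nat \<Rightarrow> (nat \<Rightarrow> int) \<Rightarrow> (nat \<Rightarrow> int)" where
  "s_right n m i v = v(i := entry_add n m i (v i) (-1), i+1 := entry_add n m (i+1) (v (i+1)) 1)"

definition s_gen :: "nat \<Rightarrow> nat \<Rightarrow> nat \<Rightarrow> (nat \<Rightarrow> int) \<Rightarrow> (nat \<Rightarrow> int)" where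
  "s_gen n m i v =
     (if i = 0 then (if v 1 = 1 then s_left n m 0 v else s_right n m 0 v)
      else if i = m then (if v m = 0 then s_left n m m v else s_right n m m v)
      else v(i := v (i+1), i+1 := v i))"

text \<open>Relators of the Coxeter presentation of affine C_m, as words in the generator
  indices 0..m (all generators are involutions, so words without inverse letters suffice).\<close>
definition relators :: "nat \<Rightarrow> nat list set" where
  "relators m =
     {[i,i] | i. i \<le> m}
   \<union> {[i,j,i,j] | i j. i \<le> m \<and> j \<le> m \<and> (i + 1 < j \<or> j + 1 < i)}
   \<union> {concat (replicate 3 [i, i+1]) | i. 1 \<le> i \<and> i + 2 \<le> m}
   \<union> {concat (replicate 4 [0, 1])}
   \<union> {concat (replicate 4 [m-1, m])}"

inductive word_eq :: "nat \<Rightarrow> nat list \<Rightarrow> nat list \<Rightarrow> bool" for m where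
  rel: "r \<in> relators m \<Longrightarrow> word_eq m (a @ r @ b) (a @ b)"
| refl: "word_eq m w w"
| sym: "word_eq m w w' \<Longrightarrow> word_eq m w' w"
| trans: "word_eq m w1 w2 \<Longrightarrow> word_eq m w2 w3 \<Longrightarrow> word_eq m w1 w3"

fun word_act :: "nat \<Rightarrow> nat \<Rightarrow> nat list \<Rightarrow> (nat \<Rightarrow> int) \<Rightarrow> (nat \<Rightarrow> int)" where
  "word_act n m [] v = v"
| "word_act n m (i # w) v = s_gen n m i (word_act n m w v)"

definition schreier_adj :: "nat \<Rightarrow> nat \<Rightarrow> (nat \<Rightarrow> int) \<Rightarrow> (nat \<Rightarrow> int) \<Rightarrow> bool" where
  "schreier_adj n m x y \<longleftrightarrow> y \<noteq> x \<and> (\<exists>i\<le>m. y = s_gen n m i x)"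

end

theory Submission
  imports Defs
begin

text \<open>Away from the buckets, s_i transposes v_i and v_(i+1); at the ends it flips the binary entry
  v_1 (resp. v_m) and moves the bucket by one in the unique direction that keeps that entry binary.
  So s_i v is either v itself or the only neighbour of v across position i, and each s_i is an
  involution of the vertex set; this gives the Schreier graph description. The remaining Coxeter
  relations are local: generators at distance at least two touch disjoint positions, the middle
  ones act as adjacent transpositions, and the relations of order 4 at the two ends are checked
  on the four possible values of the two binary entries next to the bucket.\<close>

lemma yoke_V_pos: "v \<in> yoke_V n m \<Longrightarrow> 0 < n"
  by (auto simp: yoke_V_def)

lemma yoke_V_binary: "v \<in> yoke_V n m \<Longrightarrow> 1 \<le> j \<Longrightarrow> j \<le> m \<Longrightarrow> v j = 0 \<or> v j = 1"
  by (auto simp: yoke_V_def)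

lemma yoke_V_bucket_mod:
  assumes "v \<in> yoke_V n m"
  shows "v 0 mod int n = v 0" "v (m+1) mod int n = v (m+1)"
  using assms by (auto simp: yoke_V_def)

definition yoke_entries :: "nat \<Rightarrow> nat \<Rightarrow> nat \<Rightarrow> int set" where
  "yoke_entries n m j = (if j = 0 \<or> j = m+1 then {0..<int n} else if j \<le> m then {0,1} else {0})"

lemma yoke_V_iff_entries:
  "v \<in> yoke_V n m \<longleftrightarrow> (\<forall>j. v j \<in> yoke_entries n m j) \<and> (\<Sum>j\<le>m+1. v j) mod int n = 0"
proof -
  have "(\<forall>j. v j \<in> yoke_entries n m j) \<longleftrightarrow> v 0 \<in> {0..<int n} \<and> v (m+1) \<in> {0..<int n}
      \<and> (\<forall>j. 1 \<le> j \<and> j \<le> m \<longrightarrow> v j \<in> {0,1}) \<and> (\<forall>j>m+1. v j = 0)" (is "?E \<longleftrightarrow> ?C")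
  proof
    assume ?E
    then have e: "v j \<in> yoke_entries n m j" for j by blast
    have "v j \<in> {0,1}" if "1 \<le> j" "j \<le> m" for j
      using e[of j] that by (simp add: yoke_entries_def)
    moreover have "v j = 0" if "j > m+1" for j
      using e[of j] that by (simp add: yoke_entries_def)
    ultimately show ?C
      using e[of 0] e[of "m+1"] by (simp add: yoke_entries_def)
  next
    assume ?C
    show ?E
    proof
      fix j
      show "v j \<in> yoke_entries n m j"
        using \<open>?C\<close> by (cases "j = 0 \<or> j = m+1"; cases "j \<le> m") (auto simp: yoke_entries_def)
    qed
  qed
  then show ?thesis unfolding yoke_V_def by blast
qed

lemma sum_atMost_fun_upd2_mod:
  fixes v :: "nat \<Rightarrow> int"
  assumes "i + 1 \<le> N" "(a + b) mod k = (v i + v (i+1)) mod k"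
  shows "(\<Sum>j\<le>N. (v(i := a, i+1 := b)) j) mod k = (\<Sum>j\<le>N. v j) mod k"
proof -
  define S where "S = (\<Sum>j\<in>{..N}-{i,i+1}. v j)"
  have split: "(\<Sum>j\<le>N. f j) = (\<Sum>j\<in>{..N}-{i,i+1}. f j) + (f i + f (i+1))" for f :: "nat \<Rightarrow> int"
    using assms(1) by (subst sum.subset_diff[of "{i,i+1}"]) auto
  have "(\<Sum>j\<in>{..N}-{i,i+1}. (v(i := a, i+1 := b)) j) = S"
    unfolding S_def by (rule sum.cong) auto
  then have "(\<Sum>j\<le>N. (v(i := a, i+1 := b)) j) = S + (a + b)"
    unfolding split[of "v(i := a, i+1 := b)"] by simp
  then have "(\<Sum>j\<le>N. (v(i := a, i+1 := b)) j) mod k = (S + (v i + v (i+1))) mod k"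
    using assms(2) by (metis mod_add_right_eq)
  also have "\<dots> = (\<Sum>j\<le>N. v j) mod k"
    by (simp add: split[of v] S_def)
  finally show ?thesis .
qed

lemma fun_upd2_in_yoke_V:
  assumes "v \<in> yoke_V n m" "i \<le> m"
    and "a \<in> yoke_entries n m i" "b \<in> yoke_entries n m (i+1)"
    and "(a + b) mod int n = (v i + v (i+1)) mod int n"
  shows "v(i := a, i+1 := b) \<in> yoke_V n m"
  unfolding yoke_V_iff_entries
proof
  show "\<forall>j. (v(i := a, i+1 := b)) j \<in> yoke_entries n m j"
    using assms(1,3,4) by (simp add: yoke_V_iff_entries)
  show "(\<Sum>j\<le>m+1. (v(i := a, i+1 := b)) j) mod int n = 0"
    using assms(1,2,5) sum_atMost_fun_upd2_mod[of i "m+1" a b "int n" v]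
    by (simp add: yoke_V_iff_entries)
qed

lemma s_gen_first:
  "0 < m \<Longrightarrow> s_gen n m 0 v = (if v 1 = 1 then v(0 := (v 0 + 1) mod int n, 1 := 0)
                                 else v(0 := (v 0 - 1) mod int n, 1 := v 1 + 1))"
  by (simp add: s_gen_def s_left_def s_right_def entry_add_def)

lemma s_gen_last:
  "0 < m \<Longrightarrow> s_gen n m m v = (if v m = 0 then v(m := 1, m+1 := (v (m+1) - 1) mod int n)
                                 else v(m := v m - 1, m+1 := (v (m+1) + 1) mod int n))"
  by (simp add: s_gen_def s_left_def s_right_def entry_add_def)

lemma s_gen_swap: "0 < i \<Longrightarrow> i < m \<Longrightarrow> s_gen n m i v = v(i := v (i+1), i+1 := v i)"
  by (simp add: s_gen_def)

lemma s_gen_in_yoke_V: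
  assumes "v \<in> yoke_V n m" "0 < m" "i \<le> m"
  shows "s_gen n m i v \<in> yoke_V n m"
proof -
  have n: "0 < n" using yoke_V_pos[OF assms(1)] .
  note bin = yoke_V_binary[OF assms(1)]
  consider "i = 0" | "i = m" | "0 < i" "i < m" using assms(3) by linarith
  then show ?thesis
  proof cases
    case 1
    then show ?thesis using bin[of 1] assms n
      by (cases "v 1 = 1") (simp_all add: s_gen_first yoke_entries_def mod_simps
          fun_upd2_in_yoke_V[OF assms(1), of 0, simplified])
  next
    case 2
    then show ?thesis using bin[of m] assms n
      by (cases "v m = 0") (simp_all add: s_gen_last yoke_entries_def mod_simps add.commute
          fun_upd2_in_yoke_V[OF assms(1), of m, simplified])
  next
    case 3
    then show ?thesis using bin[of i] bin[of "i+1"] assms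
      by (simp add: s_gen_swap yoke_entries_def add.commute
          fun_upd2_in_yoke_V[OF assms(1), of i, simplified])
  qed
qed

lemma s_gen_involution:
  assumes "v \<in> yoke_V n m" "0 < m" "i \<le> m"
  shows "s_gen n m i (s_gen n m i v) = v"
  using assms yoke_V_bucket_mod[OF assms(1)] yoke_V_binary[OF assms(1), of 1]
    yoke_V_binary[OF assms(1), of m]
  by (auto simp: s_gen_def s_left_def s_right_def entry_add_def fun_eq_iff mod_simps)

lemma s_gen_commute:
  assumes "i + 1 < j" "j \<le> m"
  shows "s_gen n m i (s_gen n m j v) = s_gen n m j (s_gen n m i v)"
  using assms
  by (cases "i = 0"; cases "j = m") (auto simp: s_gen_def s_left_def s_right_def fun_eq_iff)

lemma s_gen_braid:
  assumes "1 \<le> i" "i + 2 \<le> m"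
  shows "(s_gen n m i \<circ> s_gen n m (i+1)) ^^ 3 = id"
  using assms by (simp add: s_gen_swap fun_eq_iff numeral_eq_Suc)

lemma s_gen_first_order_4:
  assumes "v \<in> yoke_V n m" "2 \<le> m"
  shows "((s_gen n m 0 \<circ> s_gen n m 1) ^^ 4) v = v"
  using assms yoke_V_bucket_mod[OF assms(1)] yoke_V_binary[OF assms(1), of 1]
    yoke_V_binary[OF assms(1), of 2]
  by (cases "v 1 = 1"; cases "v 2 = 1")
    (simp_all add: s_gen_first s_gen_swap numeral_eq_Suc fun_eq_iff mod_simps)

lemma s_gen_last_order_4:
  assumes "v \<in> yoke_V n m" "2 \<le> m"
  shows "((s_gen n m (m-1) \<circ> s_gen n m m) ^^ 4) v = v"
proof -
  obtain j where j: "m = Suc j" "0 < j" using assms(2) by (cases m) auto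
  have swap: "s_gen n (Suc j) j w = w(j := w (Suc j), Suc j := w j)" for w
    using j(2) by (simp add: s_gen_swap)
  have last: "s_gen n (Suc j) (Suc j) w =
      (if w (Suc j) = 0 then w(Suc j := 1, Suc (Suc j) := (w (Suc (Suc j)) - 1) mod int n)
       else w(Suc j := w (Suc j) - 1, Suc (Suc j) := (w (Suc (Suc j)) + 1) mod int n))" for w
    using s_gen_last[of "Suc j" n w] by simp
  have "v (Suc (Suc j)) mod int n = v (Suc (Suc j))"
    and "v j = 0 \<or> v j = 1" "v (Suc j) = 0 \<or> v (Suc j) = 1"
    using yoke_V_bucket_mod[OF assms(1)] yoke_V_binary[OF assms(1), of j]
      yoke_V_binary[OF assms(1), of m] j
    by auto
  then show ?thesis
    unfolding j(1) diff_Suc_1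
    by (cases "v (Suc j) = 1"; cases "v j = 1")
      (simp_all add: swap last mod_simps fun_eq_iff numeral_eq_Suc)
qed

lemma word_act_append: "word_act n m (a @ b) v = word_act n m a (word_act n m b v)"
  by (induction a) auto

lemma word_act_concat_replicate:
  "word_act n m (concat (replicate k w)) v = (word_act n m w ^^ k) v"
  by (induction k) (simp_all add: word_act_append)

lemma word_act_in_yoke_V:
  "v \<in> yoke_V n m \<Longrightarrow> 0 < m \<Longrightarrow> set w \<subseteq> {..m} \<Longrightarrow> word_act n m w v \<in> yoke_V n m"
  by (induction w) (auto intro: s_gen_in_yoke_V)

lemma word_act_relator:
  assumes "r \<in> relators m" "v \<in> yoke_V n m" "2 \<le> m"
  shows "word_act n m r v = v"
proof -
  have m: "0 < m" using assms(3) by simp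
  have pair: "word_act n m [i, j] = s_gen n m i \<circ> s_gen n m j" for i j
    by (simp add: fun_eq_iff)
  from assms(1) consider
      (square) i where "i \<le> m" "r = [i, i]"
    | (distant) i j where "i \<le> m" "j \<le> m" "i + 1 < j \<or> j + 1 < i" "r = [i, j, i, j]"
    | (braid) i where "1 \<le> i" "i + 2 \<le> m" "r = concat (replicate 3 [i, i+1])"
    | (first) "r = concat (replicate 4 [0, 1])"
    | (last) "r = concat (replicate 4 [m-1, m])"
    unfolding relators_def by blast
  then show ?thesis
  proof cases
    case (square i)
    then show ?thesis using s_gen_involution[OF assms(2) m] by simp
  next
    case (distant i j)
    then have "s_gen n m j (s_gen n m i (s_gen n m j v)) = s_gen n m i (s_gen n m j (s_gen n m j v))"
      using s_gen_commute by metis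
    then show ?thesis
      using distant s_gen_involution[OF assms(2) m]
        s_gen_involution[OF s_gen_in_yoke_V[OF assms(2) m] m]
      by simp
  next
    case (braid i)
    show ?thesis
      unfolding braid(3) word_act_concat_replicate pair s_gen_braid[OF braid(1,2)] by simp
  next
    case first
    show ?thesis
      unfolding first word_act_concat_replicate pair by (rule s_gen_first_order_4[OF assms(2,3)])
  next
    case last
    show ?thesis
      unfolding last word_act_concat_replicate pair by (rule s_gen_last_order_4[OF assms(2,3)])
  qed
qed

lemma relator_letters: "0 < m \<Longrightarrow> r \<in> relators m \<Longrightarrow> set r \<subseteq> {..m}"
  unfolding relators_def by (auto simp: numeral_eq_Suc)

lemma word_eq_letters: "word_eq m w w' \<Longrightarrow> 0 < m \<Longrightarrow> set w \<subseteq> {..m} \<longleftrightarrow> set w' \<subseteq> {..m}"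
  by (induction rule: word_eq.induct) (auto dest: relator_letters)

text \<open>Letters beyond m need not preserve yoke_V, so the bound on the letters has to be carried
  along the derivation of word_eq.\<close>

lemma word_eq_word_act:
  assumes "word_eq m w w'" "set w \<subseteq> {..m}" "v \<in> yoke_V n m" "2 \<le> m"
  shows "word_act n m w v = word_act n m w' v"
  using assms(1,2)
proof (induction rule: word_eq.induct)
  case (rel r a b)
  have "word_act n m b v \<in> yoke_V n m"
    using rel.prems assms(3,4) by (auto intro: word_act_in_yoke_V)
  then show ?case
    using word_act_relator[OF rel.hyps _ assms(4)] by (simp add: word_act_append)
next
  case (refl w)
  then show ?case by simp
next
  case (sym w w')
  then show ?case using word_eq_letters[OF sym.hyps] assms(4) by simp
next
  case (trans w1 w2 w3)
  then show ?case using word_eq_letters[OF trans.hyps(1)] assms(4) by simp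
qed

lemma yoke_adj_iff_s_left_s_right:
  "yoke_adj n m u v \<longleftrightarrow> (\<exists>i\<le>m. u = s_left n m i v \<or> u = s_right n m i v)"
  unfolding yoke_adj_def s_left_def s_right_def fun_eq_iff by fastforce

lemma s_left_neq: "0 < m \<Longrightarrow> i \<le> m \<Longrightarrow> s_left n m i v \<noteq> v"
  unfolding s_left_def entry_add_def fun_eq_iff by (cases "i = 0") auto

lemma s_right_neq: "0 < m \<Longrightarrow> i \<le> m \<Longrightarrow> s_right n m i v \<noteq> v"
  unfolding s_right_def entry_add_def fun_eq_iff by (cases "i = 0") auto

lemma s_gen_eq_s_left_or_s_right:
  assumes "v \<in> yoke_V n m" "i \<le> m" "s_gen n m i v \<noteq> v"
  shows "s_gen n m i v = s_left n m i v \<or> s_gen n m i v = s_right n m i v"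
proof (cases "0 < i \<and> i < m")
  case True
  then have "v i \<noteq> v (i+1)" using assms(3) by (auto simp: s_gen_swap)
  then show ?thesis
    using True yoke_V_binary[OF assms(1), of i] yoke_V_binary[OF assms(1), of "i+1"]
    by (auto simp: s_gen_swap s_left_def s_right_def entry_add_def)
next
  case False
  then show ?thesis using assms(2) by (auto simp: s_gen_def)
qed

text \<open>The binary entry among v_i, v_(i+1) forces the direction of a move between two vertices,
  and s_i takes exactly that direction.\<close>

lemma s_left_or_s_right_eq_s_gen:
  assumes "u \<in> yoke_V n m" "v \<in> yoke_V n m" "0 < m" "i \<le> m"
    and "u = s_left n m i v \<or> u = s_right n m i v"
  shows "u = s_gen n m i v"
proof -
  note ub = yoke_V_binary[OF assms(1)] and vb = yoke_V_binary[OF assms(2)]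
  consider "i = 0" | "i = m" | "0 < i" "i < m" using assms(4) by linarith
  then show ?thesis
  proof cases
    case 1
    have "u 1 = v 1 - 1 \<and> u = s_left n m 0 v \<or> u 1 = v 1 + 1 \<and> u = s_right n m 0 v"
      using assms(3,5) 1 by (auto simp: s_left_def s_right_def entry_add_def)
    then show ?thesis
      using 1 ub[of 1] vb[of 1] assms(3) by (auto simp: s_gen_def)
  next
    case 2
    have "u m = v m + 1 \<and> u = s_left n m m v \<or> u m = v m - 1 \<and> u = s_right n m m v"
      using assms(3,5) 2 by (auto simp: s_left_def s_right_def entry_add_def)
    then show ?thesis
      using 2 ub[of m] vb[of m] assms(3) by (auto simp: s_gen_def)
  next
    case 3
    have "u i = v i + 1 \<and> u (i+1) = v (i+1) - 1 \<and> u = s_left n m i v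
        \<or> u i = v i - 1 \<and> u (i+1) = v (i+1) + 1 \<and> u = s_right n m i v"
      using assms(5) 3 by (auto simp: s_left_def s_right_def entry_add_def)
    then show ?thesis
      using 3 ub[of i] vb[of i] ub[of "i+1"] vb[of "i+1"]
      by (auto simp: s_gen_swap s_left_def s_right_def entry_add_def)
  qed
qed

lemma yoke_adj_iff_s_gen:
  assumes "u \<in> yoke_V n m" "v \<in> yoke_V n m" "0 < m"
  shows "yoke_adj n m u v \<longleftrightarrow> (\<exists>i\<le>m. u = s_gen n m i v \<and> u \<noteq> v)"
  unfolding yoke_adj_iff_s_left_s_right
  using s_gen_eq_s_left_or_s_right[OF assms(2)] s_left_or_s_right_eq_s_gen[OF assms]
    s_left_neq[OF assms(3)] s_right_neq[OF assms(3)]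
  by metis

lemma yoke_adj_iff_schreier_adj:
  assumes "u \<in> yoke_V n m" "v \<in> yoke_V n m" "0 < m"
  shows "yoke_adj n m u v \<longleftrightarrow> schreier_adj n m u v"
proof -
  have "u = s_gen n m i v \<longleftrightarrow> v = s_gen n m i u" if "i \<le> m" for i
    using s_gen_involution[OF assms(1,3) that] s_gen_involution[OF assms(2,3) that] by metis
  then show ?thesis
    unfolding yoke_adj_iff_s_gen[OF assms] schreier_adj_def by metis
qed

theorem corollary3p17:
  fixes n m :: nat
  assumes "n \<ge> 1" and "m \<ge> 2"
  shows "(\<forall>i\<le>m. \<forall>v\<in>yoke_V n m. s_gen n m i v \<in> yoke_V n m)
       \<and> (\<forall>w1 w2. set w1 \<subseteq> {..m} \<longrightarrow> set w2 \<subseteq> {..m} \<longrightarrow> word_eq m w1 w2 \<longrightarrow>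
            (\<forall>v\<in>yoke_V n m. word_act n m w1 v = word_act n m w2 v))
       \<and> (\<forall>u\<in>yoke_V n m. \<forall>v\<in>yoke_V n m. yoke_adj n m u v \<longleftrightarrow> schreier_adj n m u v)"
proof (intro conjI allI ballI impI)
  have m: "0 < m" using assms(2) by simp
  show "s_gen n m i v \<in> yoke_V n m" if "i \<le> m" "v \<in> yoke_V n m" for i v
    using s_gen_in_yoke_V[OF that(2) m that(1)] .
  show "word_act n m w1 v = word_act n m w2 v"
    if "set w1 \<subseteq> {..m}" "word_eq m w1 w2" "v \<in> yoke_V n m" for w1 w2 v
    using word_eq_word_act[OF that(2,1,3) assms(2)] .
  show "yoke_adj n m u v \<longleftrightarrow> schreier_adj n m u v" if "u \<in> yoke_V n m" "v \<in> yoke_V n m" for u v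
    using yoke_adj_iff_schreier_adj[OF that m] .
qed

end
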